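(* Let $k$ be a positive integer, $q=4^k$, and $\Lambda:=\mathbb{F}_{4^k}\setminus\{-1,-\xi,-\xi^2\}$ (note $-1=1$ in characteristic $2$). Then $$\sum_{a\in\Lambda}\left[\eta\Big(\frac{a^2+a+1}{a^2+1}\Big)+\eta^2\Big(\frac{a^2+a+1}{a^2+1}\Big)\right]=-2+(-2)^{k+1}.$$
   Context: Here $q=4^k\equiv 1\pmod 3$. Let $\xi\in\mathbb{F}_q$ be a fixed cube root of unity with $\xi\neq 1$, and let $\delta\in\mathbb{C}$ be a fixed cube root of unity with $\delta\neq1$. Let $\eta:\mathbb{F}_q\to\mathbb{C}$ be the cubic multiplicative character defined by $\eta(0)=0$ and, for $c\in\mathbb{F}_q^*$ and integers $j$, $\eta(c)=\delta^j$ if and only if $c^{\frac{q-1}{3}}=\xi^j$. We write $\eta^2(c)$ for $\eta(c)^2$. *)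

theory Defs
  imports Complex_Main
begin

text \<open>Cubic multiplicative character of a finite field F_q (q = 1 mod 3), relative to a
  fixed nontrivial cube root of unity xi in F_q and a fixed nontrivial complex cube root
  of unity delta: eta(0) = 0 and eta(c) = delta^j iff c^((q-1)/3) = xi^j.\<close>
definition cubic_char :: "'a::{field,finite} \<Rightarrow> complex \<Rightarrow> 'a \<Rightarrow> complex" where
  "cubic_char xi delta c =
     (if c = 0 then 0
      else delta ^ (SOME j::nat. c ^ ((card (UNIV::'a set) - 1) div 3) = xi ^ j))"

end

theory Submission
  imports Defs "HOL-Library.Cardinality" "HOL-Computational_Algebra.Polynomial"
begin

text \<open>Since \<open>1 + \<eta>(c) + \<eta>(c)\<^sup>2\<close> is the number \<open>N(c)\<close> of cube roots of \<open>c\<close>, the sum counts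
  cube roots. The substitution \<open>u = 1/(a+1)\<close> turns \<open>(a\<^sup>2+a+1)/(a\<^sup>2+1)\<close> into \<open>u\<^sup>2+u+1\<close>, and
  counting the points of \<open>y\<^sup>3 = u\<^sup>2+u+1\<close> with the additive character \<open>\<psi>(v) = (-1)^Tr(v)\<close>
  gives \<open>q + T(1)\<close> for the cubic sum \<open>T(c) = \<Sum>y. \<psi>(c y\<^sup>3)\<close>. \<open>T\<close> is constant on the cosets
  of the cubes and \<open>T(g\<^sup>2) = T(g)\<close>, so for a non-cube \<open>g\<close> the moments
  \<open>\<Sum>c\<noteq>0. T(c) = 0\<close> and \<open>\<Sum>c\<noteq>0. T(c)\<^sup>2 = 2q\<^sup>2 - 2q\<close> give \<open>T(1) = -2 T(g)\<close> and
  \<open>T(1)\<^sup>2 = 4q\<close>; the congruence \<open>T(1) \<equiv> 1 (mod 3)\<close> fixes the sign, \<open>T(1) = (-2)^(k+1)\<close>.\<close>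

section \<open>Finite fields\<close>

lemma of_nat_CARD_eq_0: "(of_nat CARD('a) :: 'a::{finite,ring_1}) = 0"
proof -
  have "(\<Sum>x\<in>UNIV. x) = (\<Sum>x\<in>UNIV. x + (1::'a))"
    by (rule sum.reindex_bij_witness[of _ "\<lambda>x. x + 1" "\<lambda>x. x - 1"]) auto
  then show ?thesis by (simp add: sum.distrib)
qed

lemma finite_field_power_CARD_minus_1:
  assumes "(x::'a::{field,finite}) \<noteq> 0"
  shows "x ^ (CARD('a) - 1) = 1"
proof -
  let ?N = "UNIV - {0::'a}"
  have "(\<Prod>y\<in>?N. y) = (\<Prod>y\<in>?N. x * y)"
    by (rule prod.reindex_bij_witness[of _ "\<lambda>y. x * y" "\<lambda>y. y / x"]) (use assms in auto)
  also have "\<dots> = x ^ card ?N * (\<Prod>y\<in>?N. y)"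
    by (simp add: prod.distrib)
  finally have "x ^ card ?N = 1"
    by simp
  then show ?thesis
    by (simp add: card_Diff_singleton)
qed

lemma sum_reindex_mult:
  assumes "(w::'a::field) \<noteq> 0"
  shows "(\<Sum>c\<in>UNIV. f (w * c)) = (\<Sum>c\<in>UNIV. f c)"
  by (rule sum.reindex_bij_witness[of _ "\<lambda>c. c / w" "\<lambda>c. w * c"]) (use assms in auto)

lemma sum_UNIV_if_eq:
  fixes a b :: "'b::comm_semiring_1"
  shows "(\<Sum>y\<in>UNIV. if y = (z::'a::finite) then a else b) = a + of_nat (CARD('a) - 1) * b"
proof -
  have "(\<Sum>y\<in>UNIV. if y = z then a else b) = a + (\<Sum>y\<in>UNIV - {z}. if y = z then a else b)"
    by (subst sum.remove[of _ z]) simp_all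
  also have "(\<Sum>y\<in>UNIV - {z}. if y = z then a else b) = (\<Sum>y\<in>UNIV - {z}. b)"
    by (rule sum.cong) simp_all
  finally show ?thesis
    by (simp add: card_Diff_singleton)
qed

lemma sum_card_Collect_swap:
  "(\<Sum>x\<in>UNIV. of_nat (card {y::'b::finite. P x y})) = (\<Sum>y\<in>UNIV. of_nat (card {x::'a::finite. P x y}) :: 'c::comm_semiring_1)"
proof -
  have card_eq: "of_nat (card {z. Q z}) = (\<Sum>z\<in>UNIV. if Q z then 1 else 0 :: 'c)" for Q :: "'d::finite \<Rightarrow> bool"
    by (simp add: sum.If_cases)
  show ?thesis
    unfolding card_eq by (rule sum.swap)
qed

section \<open>Cube roots of unity and cubes\<close>

definition nonzero_cubes :: "'a::field set" where
  "nonzero_cubes = {y^3 | y. y \<noteq> 0}"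

locale cube_root_of_unity =
  fixes xi :: "'a::field"
  assumes xi_cube: "xi ^ 3 = 1" and xi_ne_1: "xi \<noteq> 1"
begin

lemma xi_square_plus_xi: "xi^2 + xi + 1 = 0"
proof -
  have "(xi - 1) * (xi^2 + xi + 1) = 0"
    using xi_cube by (simp add: algebra_simps power2_eq_square power3_eq_cube)
  then show ?thesis
    using xi_ne_1 by simp
qed

lemma xi_ne_0: "xi \<noteq> 0"
  using xi_cube by auto

lemma xi_square_ne_1: "xi^2 \<noteq> 1"
proof
  assume "xi^2 = 1"
  then have "xi^3 = xi"
    by (simp add: power3_eq_cube power2_eq_square mult.assoc)
  then show False
    using xi_cube xi_ne_1 by simp
qed

lemma xi_ne_xi_square: "xi \<noteq> xi^2"
proof
  assume "xi = xi^2"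
  then have "xi * 1 = xi * xi"
    by (simp add: power2_eq_square)
  then show False
    using xi_ne_0 xi_ne_1 by (metis mult_left_cancel)
qed

lemma xi_power_mod_3: "xi ^ j = xi ^ (j mod 3)"
proof -
  have "xi ^ j = (xi ^ 3) ^ (j div 3) * xi ^ (j mod 3)"
    by (metis power_add power_mult mult_div_mod_eq)
  then show ?thesis
    using xi_cube by simp
qed

lemma xi_power_eq_1_iff: "xi ^ j = 1 \<longleftrightarrow> 3 dvd j"
proof -
  have "j mod 3 = 0 \<or> j mod 3 = 1 \<or> j mod 3 = 2"
    by linarith
  then show ?thesis
  proof (elim disjE)
    assume "j mod 3 = 1"
    then show ?thesis
      using xi_power_mod_3[of j] xi_ne_1 by (simp add: dvd_eq_mod_eq_0)
  next
    assume "j mod 3 = 2"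
    then show ?thesis
      using xi_power_mod_3[of j] xi_square_ne_1 by (simp add: dvd_eq_mod_eq_0)
  qed (simp add: xi_power_mod_3[of j] dvd_eq_mod_eq_0)
qed

lemma cube_eq_1_iff: "e^3 = 1 \<longleftrightarrow> e = 1 \<or> e = xi \<or> e = xi^2"
proof -
  have "(e - 1) * (e - xi) * (e - xi^2)
      = e^3 - e^2 * (xi^2 + xi + 1) + e * (xi^2 + xi + 1) * xi - xi^3"
    by (simp add: algebra_simps power2_eq_square power3_eq_cube)
  then have "e^3 - 1 = (e - 1) * (e - xi) * (e - xi^2)"
    using xi_square_plus_xi xi_cube by simp
  then show ?thesis
    by (simp only: eq_iff_diff_eq_0[of "e^3"] mult_eq_0_iff eq_iff_diff_eq_0[symmetric] disj_assoc)
qed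

lemma xi_square_square: "(xi^2)^2 = xi"
proof -
  have "(xi^2)^2 = xi^3 * xi"
    by (simp add: power2_eq_square power3_eq_cube)
  then show ?thesis
    using xi_cube by simp
qed

lemma nontrivial_cube_root_powers:
  assumes "e^3 = 1" and "e \<noteq> 1"
  shows "{e, e^2} = {xi, xi^2}"
  using assms cube_eq_1_iff xi_square_square by auto

lemma quadratic_eq_0_iff: "x^2 + x + 1 = 0 \<longleftrightarrow> x = xi \<or> x = xi^2"
proof
  assume x: "x^2 + x + 1 = 0"
  have "(x - 1) * (x^2 + x + 1) = x^3 - 1"
    by (simp add: algebra_simps power2_eq_square power3_eq_cube)
  with x have "x^3 = 1"
    by simp
  moreover have "x \<noteq> 1"
  proof
    assume "x = 1"
    with x have three: "(3::'a) = 0"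
      by simp
    \<comment> \<open>in characteristic 3 the cube roots of unity collapse to 1\<close>
    have "(xi - 1)^2 = (xi^2 + xi + 1) - 3 * xi"
      by (simp add: algebra_simps power2_eq_square)
    then have "(xi - 1)^2 = 0"
      using xi_square_plus_xi three by simp
    then show False
      using xi_ne_1 by simp
  qed
  ultimately show "x = xi \<or> x = xi^2"
    using cube_eq_1_iff by blast
next
  assume "x = xi \<or> x = xi^2"
  then show "x^2 + x + 1 = 0"
    using xi_square_plus_xi xi_square_square by (auto simp: algebra_simps)
qed

lemma card_cube_roots_cube:
  fixes y :: 'a
  assumes "y \<noteq> 0"
  shows "card {z. z^3 = y^3} = 3"
proof -
  have "z^3 = y^3 \<longleftrightarrow> z = y \<or> z = xi * y \<or> z = xi^2 * y" for z
  proof -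
    have "z^3 = y^3 \<longleftrightarrow> (z / y)^3 = 1"
      using assms by (simp add: power_divide)
    also have "\<dots> \<longleftrightarrow> z / y = 1 \<or> z / y = xi \<or> z / y = xi^2"
      by (rule cube_eq_1_iff)
    also have "\<dots> \<longleftrightarrow> z = y \<or> z = xi * y \<or> z = xi^2 * y"
      using assms by (auto simp: field_simps)
    finally show ?thesis .
  qed
  then have "{z. z^3 = y^3} = {y, xi * y, xi^2 * y}"
    by auto
  moreover have "y \<noteq> xi * y" "y \<noteq> xi^2 * y" "xi * y \<noteq> xi^2 * y"
    using assms xi_ne_1 xi_square_ne_1 xi_ne_xi_square by auto
  ultimately show ?thesis
    by simp
qed

lemma card_cube_roots:
  fixes c :: 'a
  shows "card {y. y^3 = c} = (if c \<in> nonzero_cubes then 3 else if c = 0 then 1 else 0)"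
proof -
  have "{y. y^3 = c} = {}" if "c \<notin> nonzero_cubes" "c \<noteq> 0"
    using that by (auto simp: nonzero_cubes_def)
  moreover have "{y. y^3 = (0::'a)} = {0}"
    by auto
  ultimately show ?thesis
    using card_cube_roots_cube by (auto simp: nonzero_cubes_def)
qed

end

locale finite_cube_root_of_unity = cube_root_of_unity xi for xi :: "'a::{field,finite}"
begin

lemma sum_nonzero_cube:
  fixes f :: "'a \<Rightarrow> 'b::comm_semiring_1"
  shows "(\<Sum>y\<in>UNIV - {0}. f (y^3)) = 3 * (\<Sum>c\<in>nonzero_cubes. f c)"
proof -
  have "(\<Sum>y\<in>UNIV - {0}. f (y^3))
      = (\<Sum>c\<in>nonzero_cubes. \<Sum>y\<in>{y. y \<in> UNIV - {0} \<and> y^3 = c}. f (y^3))"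
    by (rule sum.group[symmetric]) (auto simp: nonzero_cubes_def)
  also have "\<dots> = (\<Sum>c\<in>nonzero_cubes. 3 * f c)"
  proof (rule sum.cong[OF refl])
    fix c :: 'a assume "c \<in> nonzero_cubes"
    then obtain y where y: "y \<noteq> 0" "c = y^3"
      by (auto simp: nonzero_cubes_def)
    then have "{z. z \<in> UNIV - {0} \<and> z^3 = c} = {z. z^3 = y^3}"
      by auto
    then show "(\<Sum>z\<in>{z. z \<in> UNIV - {0} \<and> z^3 = c}. f (z^3)) = 3 * f c"
      using card_cube_roots_cube[OF y(1)] y(2) by simp
  qed
  finally show ?thesis
    by (simp add: sum_distrib_left)
qed

lemma card_nonzero_cubes: "CARD('a) - 1 = 3 * card (nonzero_cubes :: 'a set)"
  using sum_nonzero_cube[of "\<lambda>_. 1::nat"] by (simp add: card_Diff_singleton)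

lemma card_nonzero_cubes_pos: "card (nonzero_cubes :: 'a set) > 0"
proof -
  have "(1::'a) \<in> nonzero_cubes"
    unfolding nonzero_cubes_def by (rule CollectI, rule exI[of _ 1]) simp
  then show ?thesis
    using card_gt_0_iff finite by blast
qed

lemma nonzero_cubes_eq: "nonzero_cubes = {c::'a. c \<noteq> 0 \<and> c ^ card (nonzero_cubes :: 'a set) = 1}"
proof -
  let ?R = "{c::'a. c \<noteq> 0 \<and> c ^ card (nonzero_cubes :: 'a set) = 1}"
  have sub: "nonzero_cubes \<subseteq> ?R"
  proof
    fix c :: 'a assume "c \<in> nonzero_cubes"
    then obtain y where y: "y \<noteq> 0" "c = y^3"
      by (auto simp: nonzero_cubes_def)
    then have "c ^ card (nonzero_cubes :: 'a set) = y ^ (CARD('a) - 1)"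
      unfolding card_nonzero_cubes by (simp add: power_mult)
    then show "c \<in> ?R"
      using y finite_field_power_CARD_minus_1[OF y(1)] by simp
  qed
  define p :: "'a poly" where "p = monom 1 (card (nonzero_cubes :: 'a set)) - 1"
  have poly_p: "poly p x = x ^ card (nonzero_cubes :: 'a set) - 1" for x
    by (simp add: p_def poly_monom)
  have "p \<noteq> 0"
  proof
    assume "p = 0"
    then show False
      using poly_p[of 0] card_nonzero_cubes_pos by (simp add: power_0_left card_gt_0_iff)
  qed
  have "card ?R \<le> card {x. poly p x = 0}"
    by (rule card_mono) (auto simp: poly_p)
  also have "\<dots> \<le> degree p"
    by (rule card_poly_roots_bound) fact
  also have "\<dots> \<le> card (nonzero_cubes :: 'a set)"
    unfolding p_def by (rule degree_diff_le) (auto simp: degree_monom_le)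
  finally have "card ?R \<le> card (nonzero_cubes :: 'a set)" .
  moreover have "card (nonzero_cubes :: 'a set) \<le> card ?R"
    by (rule card_mono[OF _ sub]) simp
  ultimately show ?thesis
    by (intro card_subset_eq[OF _ sub]) simp_all
qed

lemma mem_nonzero_cubes_iff:
  "(c::'a) \<in> nonzero_cubes \<longleftrightarrow> c \<noteq> 0 \<and> c ^ card (nonzero_cubes :: 'a set) = 1"
  using eqset_imp_iff[OF nonzero_cubes_eq, of c] by (simp only: mem_Collect_eq)

lemma power_card_nonzero_cubes_cube:
  fixes c :: 'a
  assumes "c \<noteq> 0"
  shows "(c ^ card (nonzero_cubes :: 'a set))^3 = 1"
  using finite_field_power_CARD_minus_1[OF assms] card_nonzero_cubes
  by (simp add: power_mult[symmetric] mult.commute)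

lemma cubic_char_plus_square:
  assumes "delta^3 = 1" and "delta \<noteq> 1"
  shows "cubic_char xi delta c + (cubic_char xi delta c)^2 = of_nat (card {y. y^3 = c}) - 1"
proof (cases "c = 0")
  case True
  then have "{y. y^3 = c} = {0}"
    by auto
  with True show ?thesis
    by (simp add: cubic_char_def)
next
  case False
  interpret delta: cube_root_of_unity delta
    using assms by unfold_locales
  have "\<exists>j. c ^ card (nonzero_cubes :: 'a set) = xi ^ j"
    using power_card_nonzero_cubes_cube[OF False] cube_eq_1_iff by (metis power_one_right)
  define j where "j = (SOME j. c ^ card (nonzero_cubes :: 'a set) = xi ^ j)"
  have j: "c ^ card (nonzero_cubes :: 'a set) = xi ^ j"
    unfolding j_def by (rule someI_ex) fact
  have "(CARD('a) - 1) div 3 = card (nonzero_cubes :: 'a set)"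
    using card_nonzero_cubes by simp
  then have char: "cubic_char xi delta c = delta ^ j"
    using False by (simp add: cubic_char_def j_def)
  show ?thesis
  proof (cases "3 dvd j")
    case True
    then have "c \<in> nonzero_cubes"
      unfolding mem_nonzero_cubes_iff using j xi_power_eq_1_iff \<open>c \<noteq> 0\<close> by simp
    then show ?thesis
      using True char delta.xi_power_eq_1_iff[of j] card_cube_roots[of c] by simp
  next
    case False
    then have "c \<notin> nonzero_cubes"
      unfolding mem_nonzero_cubes_iff using j xi_power_eq_1_iff by simp
    have "(delta ^ j)^3 = 1"
      by (metis assms(1) mult.commute power_mult power_one)
    then interpret delta_j: cube_root_of_unity "delta ^ j"
      using False delta.xi_power_eq_1_iff[of j] by unfold_locales simp_all
    show ?thesis
      using delta_j.xi_square_plus_xi card_cube_roots[of c] \<open>c \<noteq> 0\<close> \<open>c \<notin> nonzero_cubes\<close> char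
      by (simp add: algebra_simps eq_neg_iff_add_eq_0)
  qed
qed

lemma exists_nonzero_noncube: "\<exists>g::'a. g \<noteq> 0 \<and> g \<notin> nonzero_cubes"
proof -
  have "card (nonzero_cubes :: 'a set) < card (UNIV - {0::'a})"
    using card_nonzero_cubes card_nonzero_cubes_pos by (simp add: card_Diff_singleton)
  then have "\<not> UNIV - {0} \<subseteq> (nonzero_cubes :: 'a set)"
    using card_mono[of "nonzero_cubes :: 'a set" "UNIV - {0}"] by auto
  then show ?thesis
    by blast
qed

lemma sum_power_card_nonzero_cubes_fiber:
  fixes F :: "'a \<Rightarrow> 'b::comm_semiring_1"
  assumes F_cube: "\<And>c t. t \<noteq> 0 \<Longrightarrow> F (c * t^3) = F c" and "j \<noteq> 0"
  shows "(\<Sum>c | c \<noteq> 0 \<and> c ^ card (nonzero_cubes :: 'a set) = j ^ card (nonzero_cubes :: 'a set). F c)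
    = of_nat (card (nonzero_cubes :: 'a set)) * F j"
proof -
  have "(\<Sum>c | c \<noteq> 0 \<and> c ^ card (nonzero_cubes :: 'a set) = j ^ card (nonzero_cubes :: 'a set). F c)
      = (\<Sum>c\<in>nonzero_cubes. F (j * c))"
    by (rule sum.reindex_bij_witness[of _ "\<lambda>c. j * c" "\<lambda>c. c / j"])
      (use \<open>j \<noteq> 0\<close> in \<open>auto simp: mem_nonzero_cubes_iff power_mult_distrib power_divide\<close>)
  also have "\<dots> = (\<Sum>c\<in>(nonzero_cubes :: 'a set). F j)"
  proof (rule sum.cong[OF refl])
    fix c :: 'a assume "c \<in> nonzero_cubes"
    then obtain t where "t \<noteq> 0" "c = t^3"
      by (auto simp: nonzero_cubes_def)
    then show "F (j * c) = F j"
      using F_cube by simp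
  qed
  finally show ?thesis
    by simp
qed

text \<open>The map \<open>c \<mapsto> c ^ card nonzero_cubes\<close> sorts the nonzero elements into the three
  cosets of the cubes, represented by \<open>1\<close>, \<open>g\<close> and \<open>g\<^sup>2\<close> for any non-cube \<open>g\<close>.\<close>
lemma sum_nonzero_cube_invariant:
  fixes F :: "'a \<Rightarrow> 'b::comm_semiring_1"
  assumes F_cube: "\<And>c t. t \<noteq> 0 \<Longrightarrow> F (c * t^3) = F c"
    and g: "g \<noteq> 0" "g \<notin> nonzero_cubes"
  shows "(\<Sum>c\<in>UNIV - {0}. F c) = of_nat (card (nonzero_cubes :: 'a set)) * (F 1 + F g + F (g^2))"
proof -
  let ?n = "card (nonzero_cubes :: 'a set)"
  define b where "b = g ^ ?n"
  have "b^3 = 1" "b \<noteq> 1"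
    using power_card_nonzero_cubes_cube[OF g(1)] mem_nonzero_cubes_iff g b_def by auto
  then interpret b: cube_root_of_unity b
    by unfold_locales
  have b: "{b, b^2} = {xi, xi^2}"
    using nontrivial_cube_root_powers b.xi_cube b.xi_ne_1 .
  have distinct: "b \<noteq> 1" "b^2 \<noteq> 1" "b \<noteq> b^2"
    using b.xi_ne_1 b.xi_square_ne_1 b.xi_ne_xi_square by auto
  have b_square: "b^2 = (g^2) ^ ?n"
    unfolding b_def by (metis power_mult mult.commute)
  define S where "S e = (\<Sum>c | c \<noteq> 0 \<and> c ^ ?n = e. F c)" for e
  have "(\<lambda>c. c ^ ?n) ` (UNIV - {0}) \<subseteq> {1, b, b^2}"
    using power_card_nonzero_cubes_cube cube_eq_1_iff b by auto
  then have "(\<Sum>c\<in>UNIV - {0}. F c) = (\<Sum>e\<in>{1, b, b^2}. \<Sum>c | c \<in> UNIV - {0} \<and> c ^ ?n = e. F c)"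
    by (intro sum.group[symmetric]) auto
  also have "\<dots> = (\<Sum>e\<in>{1, b, b^2}. S e)"
    by (simp add: S_def)
  also have "\<dots> = S 1 + S b + S (b^2)"
    using distinct by (simp add: add.assoc)
  also have "S 1 = of_nat ?n * F 1"
    using sum_power_card_nonzero_cubes_fiber[of F 1, OF F_cube] by (simp add: S_def)
  also have "S b = of_nat ?n * F g"
    using sum_power_card_nonzero_cubes_fiber[of F g, OF F_cube g(1)] by (simp add: S_def b_def)
  also have "S (b^2) = of_nat ?n * F (g^2)"
    using sum_power_card_nonzero_cubes_fiber[of F "g^2", OF F_cube] g(1) b_square by (simp add: S_def)
  finally show ?thesis
    by (simp add: distrib_left)
qed

lemma sum_card_cube_roots_cube: "(\<Sum>y\<in>UNIV. int (card {z::'a. z^3 = y^3})) = 3 * int CARD('a) - 2"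
proof -
  have "{z. z^3 = (0::'a)^3} = {0}"
    by auto
  then have "(\<Sum>y\<in>UNIV. int (card {z::'a. z^3 = y^3})) = (\<Sum>y\<in>UNIV. if y = (0::'a) then 1 else 3)"
    by (intro sum.cong refl) (simp add: card_cube_roots_cube)
  also have "\<dots> = 3 * int CARD('a) - 2"
    using zero_less_card_finite[where 'a='a] by (simp add: sum_UNIV_if_eq)
  finally show ?thesis .
qed

end

section \<open>Characteristic 2: the Artin--Schreier map and the trace character\<close>

definition artin_schreier :: "'a::field \<Rightarrow> 'a" where
  "artin_schreier u = u^2 + u"

text \<open>In characteristic 2 the image of \<open>artin_schreier\<close> is the kernel of the absolute trace,
  so \<open>trace_sign v = (-1)^Tr(v)\<close> is the canonical additive character.\<close>
definition trace_sign :: "'a::field \<Rightarrow> int" where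
  "trace_sign v = (if v \<in> range artin_schreier then 1 else -1)"

locale char_two =
  assumes two_eq_zero: "(2::'a::{field,finite}) = 0"
begin

declare two_eq_zero [simp]

lemma add_self [simp]: "(x::'a) + x = 0"
  using two_eq_zero by (metis mult_2 mult_zero_left)

lemma add_self_left [simp]: "(x::'a) + (x + y) = y"
  by (simp flip: add.assoc)

lemma minus_eq_self [simp]: "- (x::'a) = x"
  by (metis add_self eq_neg_iff_add_eq_0)

lemma add_eq_0_iff_eq: "(x::'a) + y = 0 \<longleftrightarrow> x = y"
  by (metis add_self add_self_left)

lemma power2_add: "((x::'a) + y)^2 = x^2 + y^2"
proof -
  have "(x + y)^2 = x^2 + y^2 + (x * y + x * y)"
    by (simp add: power2_eq_square algebra_simps)
  then show ?thesis
    by simp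
qed

lemma sum_reindex_power2: "(\<Sum>y\<in>UNIV. f (y^2)) = (\<Sum>y\<in>UNIV. f (y::'a))"
proof -
  have "inj (\<lambda>y::'a. y^2)"
  proof (rule injI)
    fix y z :: 'a
    assume "y^2 = z^2"
    then have "(y + z)^2 = 0"
      by (simp add: power2_add)
    then show "y = z"
      by (simp add: add_eq_0_iff_eq)
  qed
  then have "bij (\<lambda>y::'a. y^2)"
    by (simp add: bij_def finite_UNIV_inj_surj)
  then show ?thesis
    by (rule sum.reindex_bij_betw)
qed

lemma artin_schreier_add: "artin_schreier (u + v) = artin_schreier u + artin_schreier (v::'a)"
  by (simp add: artin_schreier_def power2_add algebra_simps)

lemma artin_schreier_eq_iff:
  fixes u v :: 'a
  shows "artin_schreier u = artin_schreier v \<longleftrightarrow> v = u \<or> v = u + (1::'a)"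
proof -
  have "artin_schreier u = artin_schreier v \<longleftrightarrow> artin_schreier (u + v) = 0"
    by (simp add: artin_schreier_add add_eq_0_iff_eq)
  also have "\<dots> \<longleftrightarrow> (u + v) * (u + v + 1) = 0"
    by (simp add: artin_schreier_def power2_eq_square algebra_simps)
  also have "\<dots> \<longleftrightarrow> v = u \<or> v = u + 1"
    by (auto simp: add_eq_0_iff_eq add.assoc)
  finally show ?thesis .
qed

lemma card_artin_schreier_fiber:
  fixes v :: 'a
  shows "card {u. artin_schreier u = v} = (if v \<in> range artin_schreier then 2 else 0)"
proof (cases "v \<in> range artin_schreier")
  case True
  then obtain u where "v = artin_schreier u"
    by auto
  then have "{u. artin_schreier u = v} = {u, u + (1::'a)}"
    by (auto simp: artin_schreier_eq_iff)
  with True show ?thesis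
    by simp
qed auto

lemma card_range_artin_schreier: "2 * card (range (artin_schreier :: 'a \<Rightarrow> 'a)) = CARD('a)"
proof -
  have "CARD('a) = (\<Sum>v\<in>range artin_schreier. card {u::'a. u \<in> UNIV \<and> artin_schreier u = v})"
    using sum.group[of UNIV "range artin_schreier" "artin_schreier :: 'a \<Rightarrow> 'a" "\<lambda>_. 1::nat"]
    by simp
  also have "\<dots> = (\<Sum>v\<in>range (artin_schreier :: 'a \<Rightarrow> 'a). 2)"
    by (intro sum.cong) (simp_all add: card_artin_schreier_fiber)
  finally show ?thesis
    by simp
qed

lemma card_compl_range_artin_schreier:
  "card (- range (artin_schreier :: 'a \<Rightarrow> 'a)) = card (range (artin_schreier :: 'a \<Rightarrow> 'a))"
  using card_range_artin_schreier card_Diff_subset[of "range (artin_schreier :: 'a \<Rightarrow> 'a)" UNIV]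
  by (simp add: Compl_eq_Diff_UNIV)

lemma add_mem_range_artin_schreier_iff:
  assumes "v \<in> range artin_schreier"
  shows "v + w \<in> range artin_schreier \<longleftrightarrow> (w::'a) \<in> range artin_schreier"
proof -
  have closed: "x + y \<in> range artin_schreier"
    if "x \<in> range artin_schreier" "y \<in> range artin_schreier" for x y :: 'a
    using that by (auto simp flip: artin_schreier_add)
  show ?thesis
    using closed[OF assms, of "v + w"] closed[OF assms, of w] by auto
qed

text \<open>The range of \<open>artin_schreier\<close> is an additive subgroup of index 2, so a translate by an
  element outside it is its complement.\<close>
lemma add_mem_range_artin_schreier:
  assumes "v \<notin> range artin_schreier" "w \<notin> range artin_schreier"
  shows "v + w \<in> range (artin_schreier :: 'a \<Rightarrow> 'a)"
proof -
  let ?H = "range (artin_schreier :: 'a \<Rightarrow> 'a)"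
  have sub: "(\<lambda>x. x + v) ` ?H \<subseteq> - ?H"
    using assms(1) add_mem_range_artin_schreier_iff by (auto simp: add.commute)
  have "card ((\<lambda>x. x + v) ` ?H) = card (- ?H)"
    using card_compl_range_artin_schreier by (simp add: card_image inj_on_def)
  then have "(\<lambda>x. x + v) ` ?H = - ?H"
    by (intro card_subset_eq[OF _ sub]) simp
  with assms(2) obtain x where "x \<in> ?H" "w = x + v"
    by blast
  then show ?thesis
    by (simp add: add.commute)
qed

lemma trace_sign_add: "trace_sign (v + w) = trace_sign v * trace_sign (w::'a)"
  using add_mem_range_artin_schreier_iff[of v w] add_mem_range_artin_schreier_iff[of w v]
    add_mem_range_artin_schreier[of v w]
  by (auto simp: trace_sign_def add.commute)

lemma trace_sign_artin_schreier: "trace_sign (artin_schreier (u::'a)) = 1"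
  by (simp add: trace_sign_def)

lemma trace_sign_0: "trace_sign (0::'a) = 1"
  using trace_sign_artin_schreier[of 0] by (simp add: artin_schreier_def)

lemma trace_sign_power2: "trace_sign ((x::'a)^2) = trace_sign x"
proof -
  have "x^2 = x + artin_schreier x"
    by (simp add: artin_schreier_def add.commute)
  then show ?thesis
    by (simp add: trace_sign_add trace_sign_artin_schreier)
qed

lemma card_artin_schreier_fiber_eq: "int (card {u. artin_schreier u = v}) = 1 + trace_sign (v::'a)"
  by (simp add: card_artin_schreier_fiber trace_sign_def)

lemma sum_trace_sign: "(\<Sum>v\<in>UNIV. trace_sign (v::'a)) = 0"
proof -
  have "(\<Sum>v\<in>UNIV. trace_sign (v::'a))
      = int (card (range (artin_schreier :: 'a \<Rightarrow> 'a))) - int (card (- range (artin_schreier :: 'a \<Rightarrow> 'a)))"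
    by (simp add: trace_sign_def sum.If_cases Compl_eq_Diff_UNIV)
  then show ?thesis
    by (simp add: card_compl_range_artin_schreier)
qed

lemma sum_nonzero_trace_sign_mult:
  "(\<Sum>c\<in>UNIV - {0}. trace_sign (w * c)) = (if w = 0 then int CARD('a) - 1 else - 1)"
  for w :: 'a
proof -
  have "(\<Sum>c\<in>UNIV. trace_sign (w * c)) = trace_sign (0::'a) + (\<Sum>c\<in>UNIV - {0}. trace_sign (w * c))"
    by (subst sum.remove[of _ 0]) simp_all
  moreover have "(\<Sum>c\<in>UNIV. trace_sign (w * c)) = (if w = 0 then int CARD('a) else 0)"
    using sum_reindex_mult[of w trace_sign] by (simp add: trace_sign_0 sum_trace_sign)
  ultimately have "(\<Sum>c\<in>UNIV - {0}. trace_sign (w * c)) = (if w = 0 then int CARD('a) else 0) - 1"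
    by (simp add: trace_sign_0)
  then show ?thesis
    by simp
qed

lemma quotient_eq_reciprocal_quadratic:
  assumes "(a::'a) \<noteq> 1"
  shows "(a^2 + a + 1) / (a^2 + 1) = (1 / (a + 1))^2 + 1 / (a + 1) + 1"
proof -
  define b where "b = a + 1"
  have "b \<noteq> 0"
    using assms by (simp add: b_def add_eq_0_iff_eq)
  have a: "a = b + 1"
    by (simp add: b_def add.assoc)
  have "a^2 + 1 = b^2" and "a^2 + a + 1 = b^2 + b + 1"
    unfolding a by (simp_all add: power2_add add.assoc)
  then have "(a^2 + a + 1) / (a^2 + 1) = (b^2 + b + 1) / b^2"
    by simp
  also have "\<dots> = (1 / b)^2 + 1 / b + 1"
    using \<open>b \<noteq> 0\<close> by (simp add: field_simps power2_eq_square)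
  finally show ?thesis
    by (simp only: b_def)
qed

end

section \<open>The cubic exponential sum\<close>

definition cubic_sum :: "'a::field \<Rightarrow> int" where
  "cubic_sum c = (\<Sum>y\<in>UNIV. trace_sign (c * y^3))"

locale char_two_cube_root_of_unity = finite_cube_root_of_unity xi for xi :: "'a::{field,finite}" +
  assumes characteristic_2: "(2::'a) = 0"
begin

sublocale char_two
  using characteristic_2 by unfold_locales

lemma trace_sign_1: "trace_sign (1::'a) = 1"
proof -
  have "artin_schreier xi = 1"
    using xi_square_plus_xi by (simp add: artin_schreier_def add_eq_0_iff_eq)
  then show ?thesis
    by (metis trace_sign_artin_schreier)
qed

lemma cubic_sum_mult_cube:
  assumes "t \<noteq> 0"
  shows "cubic_sum (c * t^3) = cubic_sum (c::'a)"
proof -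
  have "cubic_sum (c * t^3) = (\<Sum>y\<in>UNIV. (\<lambda>z. trace_sign (c * z^3)) (t * y))"
    by (simp add: cubic_sum_def power_mult_distrib mult.assoc)
  also have "\<dots> = cubic_sum c"
    unfolding cubic_sum_def by (rule sum_reindex_mult[OF assms])
  finally show ?thesis .
qed

lemma cubic_sum_power2: "cubic_sum (c^2) = cubic_sum (c::'a)"
proof -
  have "(c * y^3)^2 = c^2 * (y^2)^3" for y
    by (simp add: power_mult_distrib power_mult[symmetric] mult.commute)
  then have "cubic_sum c = (\<Sum>y\<in>UNIV. trace_sign (c^2 * (y^2)^3))"
    unfolding cubic_sum_def by (metis trace_sign_power2)
  also have "\<dots> = cubic_sum (c^2)"
    unfolding cubic_sum_def by (rule sum_reindex_power2)
  finally show ?thesis ..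
qed

lemma sum_cubic_sum: "(\<Sum>c\<in>UNIV - {0::'a}. cubic_sum c) = 0"
proof -
  have "(\<Sum>c\<in>UNIV - {0::'a}. cubic_sum c) = (\<Sum>y\<in>UNIV. \<Sum>c\<in>UNIV - {0::'a}. trace_sign (y^3 * c))"
    unfolding cubic_sum_def by (subst sum.swap) (simp add: mult.commute)
  also have "\<dots> = (\<Sum>y\<in>UNIV. if y = (0::'a) then int CARD('a) - 1 else - 1)"
    by (simp add: sum_nonzero_trace_sign_mult)
  also have "\<dots> = 0"
    by (simp add: sum_UNIV_if_eq)
  finally show ?thesis .
qed

lemma sum_cubic_sum_square:
  "(\<Sum>c\<in>UNIV - {0::'a}. (cubic_sum c)^2) = 2 * int CARD('a)^2 - 2 * int CARD('a)"
proof -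
  let ?q = "int CARD('a)"
  have product: "trace_sign (c * y^3) * trace_sign (c * z^3) = trace_sign ((y^3 + z^3) * c)"
    for c y z :: 'a
    by (simp add: trace_sign_add[symmetric] distrib_right mult.commute[of c])
  have square: "(cubic_sum c)^2 = (\<Sum>y\<in>UNIV. \<Sum>z\<in>UNIV. trace_sign ((y^3 + z^3) * c))" for c :: 'a
    unfolding cubic_sum_def power2_eq_square sum_product product ..
  have inner: "(\<Sum>c\<in>UNIV - {0}. trace_sign ((y^3 + z^3) * c))
      = ?q * (if z^3 = y^3 then 1 else 0) - 1" for y z :: 'a
    by (simp add: sum_nonzero_trace_sign_mult add_eq_0_iff_eq eq_commute[of "y^3"])
  have "(\<Sum>c\<in>UNIV - {0::'a}. (cubic_sum c)^2)
      = (\<Sum>y\<in>UNIV. \<Sum>c\<in>UNIV - {0}. \<Sum>z\<in>UNIV. trace_sign ((y^3 + z^3) * (c::'a)))"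
    unfolding square by (rule sum.swap)
  also have "\<dots> = (\<Sum>y\<in>UNIV. \<Sum>z\<in>UNIV. \<Sum>c\<in>UNIV - {0}. trace_sign ((y^3 + z^3) * (c::'a)))"
    by (rule sum.cong[OF refl]) (rule sum.swap)
  also have "\<dots> = (\<Sum>y\<in>UNIV. ?q * int (card {z::'a. z^3 = y^3}) - ?q)"
    unfolding inner by (simp add: sum_subtractf sum_distrib_left[symmetric] sum.If_cases)
  also have "\<dots> = ?q * (3 * ?q - 2) - ?q * ?q"
    by (simp add: sum_subtractf sum_distrib_left[symmetric] sum_card_cube_roots_cube)
  finally show ?thesis
    by (simp add: algebra_simps power2_eq_square)
qed

lemma cubic_sum_1_mod_3: "cubic_sum (1::'a) mod 3 = 1"
proof -
  have "cubic_sum (1::'a) = trace_sign (0::'a) + (\<Sum>y\<in>UNIV - {0::'a}. trace_sign (y^3))"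
    unfolding cubic_sum_def by (subst sum.remove[of _ 0]) simp_all
  then have "cubic_sum (1::'a) = 1 + 3 * (\<Sum>c\<in>nonzero_cubes. trace_sign (c::'a))"
    by (simp add: sum_nonzero_cube trace_sign_0)
  then show ?thesis
    by simp
qed

lemma cubic_sum_1_square: "(cubic_sum (1::'a))^2 = 4 * int CARD('a)"
proof -
  let ?n = "int (card (nonzero_cubes :: 'a set))" and ?q = "int CARD('a)"
  obtain g :: 'a where g: "g \<noteq> 0" "g \<notin> nonzero_cubes"
    using exists_nonzero_noncube by blast
  have "?n > 0" and q: "?q = 3 * ?n + 1"
    using card_nonzero_cubes_pos card_nonzero_cubes zero_less_card_finite[where 'a='a] by linarith+
  have "?n * (cubic_sum (1::'a) + cubic_sum g + cubic_sum (g^2)) = 0"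
    using sum_nonzero_cube_invariant[of cubic_sum, OF cubic_sum_mult_cube g] sum_cubic_sum by simp
  with \<open>?n > 0\<close> have first: "cubic_sum (1::'a) = - 2 * cubic_sum g"
    by (simp add: cubic_sum_power2 card_gt_0_iff)
  have "?n * ((cubic_sum (1::'a))^2 + (cubic_sum g)^2 + (cubic_sum (g^2))^2) = 2 * ?q^2 - 2 * ?q"
    using sum_nonzero_cube_invariant[of "\<lambda>c. (cubic_sum c)^2", OF _ g] sum_cubic_sum_square
    by (simp add: cubic_sum_mult_cube)
  also have "\<dots> = ?n * (6 * ?q)"
    unfolding q by (simp add: algebra_simps power2_eq_square)
  finally have "(cubic_sum (1::'a))^2 + 2 * (cubic_sum g)^2 = 6 * ?q"
    using \<open>?n > 0\<close> by (simp add: cubic_sum_power2 card_gt_0_iff)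
  with first show ?thesis
    by (simp add: power2_eq_square algebra_simps)
qed

lemma cubic_sum_1:
  assumes "CARD('a) = 4 ^ k"
  shows "cubic_sum (1::'a) = (-2) ^ (k + 1)"
proof -
  have "((-2::int) ^ (k + 1))^2 = 4 ^ (k + 1)"
    by (simp flip: power_mult add: mult.commute[of _ 2] power_mult)
  then have "(cubic_sum (1::'a))^2 = ((-2) ^ (k + 1))^2"
    using cubic_sum_1_square assms by simp
  then have "cubic_sum (1::'a) = (-2) ^ (k + 1) \<or> cubic_sum (1::'a) = - ((-2) ^ (k + 1))"
    using power2_eq_iff by blast
  moreover have "(-2::int) ^ (k + 1) mod 3 = 1"
    using power_mod[of "-2::int" 3 "k + 1"] by simp
  ultimately show ?thesis
    using cubic_sum_1_mod_3 by (auto simp: zmod_zminus1_eq_if)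
qed

lemma sum_card_cube_roots_quadratic:
  "(\<Sum>u\<in>UNIV. int (card {y::'a. y^3 = u^2 + u + 1})) = int CARD('a) + cubic_sum (1::'a)"
proof -
  have "y^3 = u^2 + u + 1 \<longleftrightarrow> artin_schreier u = y^3 + 1" for u y :: 'a
    by (metis add_self_left add.commute artin_schreier_def)
  then have "(\<Sum>u\<in>UNIV. int (card {y::'a. y^3 = u^2 + u + 1}))
      = (\<Sum>u\<in>UNIV. int (card {y::'a. artin_schreier u = y^3 + 1}))"
    by (simp only:)
  also have "\<dots> = (\<Sum>y\<in>UNIV. int (card {u. artin_schreier u = (y::'a)^3 + 1}))"
    by (rule sum_card_Collect_swap)
  also have "\<dots> = (\<Sum>y\<in>UNIV. 1 + trace_sign ((y::'a)^3 + 1))"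
    by (simp only: card_artin_schreier_fiber_eq)
  also have "\<dots> = int CARD('a) + cubic_sum (1::'a)"
    by (simp add: sum.distrib trace_sign_add trace_sign_1 cubic_sum_def)
  finally show ?thesis .
qed

lemma sum_card_cube_roots_quotient:
  "(\<Sum>a\<in>UNIV - {1, xi, xi^2}. int (card {y. y^3 = (a^2 + a + 1) / (a^2 + 1)}))
    = int CARD('a) + cubic_sum (1::'a) - 5"
proof -
  define N where "N c = int (card {y. y^3 = c})" for c :: 'a
  define g where "g a = (1 / (a + 1))^2 + 1 / (a + 1) + 1" for a :: 'a
  \<comment> \<open>\<open>a \<mapsto> 1/(a+1)\<close> is a bijection of the field (also at \<open>a = 1\<close>, where \<open>1/0 = 0\<close>)\<close>
  have "(\<Sum>a\<in>UNIV. N (g a)) = (\<Sum>u\<in>UNIV. N (u^2 + u + 1))"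
    unfolding g_def
    by (rule sum.reindex_bij_witness[of _ "\<lambda>u. 1 / u + 1" "\<lambda>a. 1 / (a + 1)"])
      (simp_all add: add.assoc)
  also have "\<dots> = int CARD('a) + cubic_sum (1::'a)"
    unfolding N_def by (rule sum_card_cube_roots_quadratic)
  finally have total: "(\<Sum>a\<in>UNIV. N (g a)) = int CARD('a) + cubic_sum (1::'a)" .
  have quotient: "(a^2 + a + 1) / (a^2 + 1) = g a" if "a \<noteq> 1" for a
    unfolding g_def using that by (rule quotient_eq_reciprocal_quadratic)
  have "(xi^2)^2 + xi^2 + 1 = 0"
    using quadratic_eq_0_iff by blast
  then have "g 1 = 1" "g xi = 0" "g (xi^2) = 0"
    using quotient[OF xi_ne_1] quotient[OF xi_square_ne_1] xi_square_plus_xi by (simp_all add: g_def)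
  moreover have "N 1 = 3" "N 0 = 1"
    using card_cube_roots_cube[of 1] card_cube_roots[of 0] by (simp_all add: N_def)
  ultimately have "(\<Sum>a\<in>{1, xi, xi^2}. N (g a)) = 5"
    using xi_ne_1 xi_square_ne_1 xi_ne_xi_square by simp
  moreover have "(\<Sum>a\<in>UNIV. N (g a))
      = (\<Sum>a\<in>UNIV - {1, xi, xi^2}. N (g a)) + (\<Sum>a\<in>{1, xi, xi^2}. N (g a))"
    by (rule sum.subset_diff) simp_all
  moreover have "(\<Sum>a\<in>UNIV - {1, xi, xi^2}. N (g a))
      = (\<Sum>a\<in>UNIV - {1, xi, xi^2}. int (card {y. y^3 = (a^2 + a + 1) / (a^2 + 1)}))"
    by (rule sum.cong) (simp_all add: N_def quotient)
  ultimately show ?thesis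
    using total by linarith
qed

lemma sum_cubic_char_quotient:
  assumes "delta^3 = 1" and "delta \<noteq> 1"
  shows "(\<Sum>a\<in>UNIV - {1, xi, xi^2}.
            cubic_char xi delta ((a^2 + a + 1) / (a^2 + 1))
          + (cubic_char xi delta ((a^2 + a + 1) / (a^2 + 1)))^2)
         = of_int (cubic_sum (1::'a) - 2)"
proof -
  let ?\<Lambda> = "UNIV - {1, xi, xi^2}"
  have "card {1, xi, xi^2} = 3"
    using xi_ne_1 xi_square_ne_1 xi_ne_xi_square by simp
  then have "card ?\<Lambda> = CARD('a) - 3" and "3 \<le> CARD('a)"
    using card_mono[OF finite subset_UNIV, of "{1, xi, xi^2}"] by (simp_all add: card_Diff_subset)
  then have card_\<Lambda>: "int (card ?\<Lambda>) = int CARD('a) - 3"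
    by simp
  have "(\<Sum>a\<in>?\<Lambda>. cubic_char xi delta ((a^2 + a + 1) / (a^2 + 1))
          + (cubic_char xi delta ((a^2 + a + 1) / (a^2 + 1)))^2)
      = of_int (\<Sum>a\<in>?\<Lambda>. int (card {y. y^3 = (a^2 + a + 1) / (a^2 + 1)}) - 1)"
    unfolding of_int_sum by (intro sum.cong refl) (simp add: cubic_char_plus_square[OF assms])
  also have "(\<Sum>a\<in>?\<Lambda>. int (card {y. y^3 = (a^2 + a + 1) / (a^2 + 1)}) - 1)
      = (\<Sum>a\<in>?\<Lambda>. int (card {y. y^3 = (a^2 + a + 1) / (a^2 + 1)})) - int (card ?\<Lambda>)"
    by (simp add: sum_subtractf)
  also have "\<dots> = cubic_sum (1::'a) - 2"
    unfolding sum_card_cube_roots_quotient card_\<Lambda> by simp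
  finally show ?thesis .
qed

end

theorem lemma4p4:
  fixes xi :: "'a::{field,finite}" and delta :: complex and k :: nat
  assumes "k > 0" and "card (UNIV::'a set) = 4 ^ k"
    and "xi ^ 3 = 1" and "xi \<noteq> 1"
    and "delta ^ 3 = 1" and "delta \<noteq> 1"
  shows "(\<Sum>a \<in> UNIV - {-1, -xi, -(xi^2)}.
            cubic_char xi delta ((a^2 + a + 1) / (a^2 + 1))
          + (cubic_char xi delta ((a^2 + a + 1) / (a^2 + 1)))^2)
         = -2 + (-2) ^ (k + 1)"
proof -
  have "(2::'a) ^ (2 * k) = 0"
    using of_nat_CARD_eq_0[where 'a='a] assms(2) by (simp add: power_mult)
  then have "(2::'a) = 0"
    by simp
  then interpret char_two_cube_root_of_unity xi
    using assms(3,4) by unfold_locales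
  show ?thesis
    using sum_cubic_char_quotient[OF assms(5,6)] cubic_sum_1[OF assms(2)] by simp
qed

end
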